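(* Let $n\in\mathbb N$ and $\lambda\in\mathbb C\setminus\{0\}$ satisfy $(n^2+i\lambda-\lambda^2)J_n(\lambda)+\lambda J_n'(\lambda)=0$. Then $i\lambda\in\sigma(P)$, and the function $u(r,\theta)=J_n(\lambda r)e^{in\theta}$ ($0\le r\le1$, $\theta\in\mathbb R/2\pi\mathbb Z$) is a nonzero element of $\operatorname{dom}(A)$ with $P(i\lambda)u=0$.
   Context: Disk case: $\Omega=\mathbb D=\{x\in\mathbb R^2:|x|<1\}$, $\Gamma=\Gamma_0=\partial\mathbb D$, written in polar coordinates $(r,\theta)$. $H=L^2(\mathbb D)\times L^2(\partial\mathbb D)$; $\operatorname{dom}(A)=\{u\in H^2(\mathbb D):u|_{\partial\mathbb D}\in H^2(\partial\mathbb D)\}$, identified with a subspace of $H$ via $u\mapsto(u,u|_{\partial\mathbb D})$, and $Au=(-\Delta u,\,-\partial_\theta^2u+\partial_ru|_{r=1})$; $BB^*(v,w)=(0,w)$. For $z\in\mathbb C$, $P(z)=A+zBB^*+z^2$ on $H$ with domain $\operatorname{dom}(A)$, and $\sigma(P)$ is the set of $z$ for which $P(z)$ has no inverse in $\mathcal L(H)$. $J_n(z)=\sum_{m\ge0}\frac{(-1)^m}{m!(m+n)!}(z/2)^{2m+n}$ is the Bessel function of the first kind of order $n$. *)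

theory Defs
  imports "HOL-Analysis.Analysis"
begin

text \<open>Points of the plane are pairs (x,y) :: real * real. The unit disk and its boundary
  (parametrised by the angle theta in [0, 2 pi], arc length measure d theta).\<close>

type_synonym pt = "real \<times> real"

definition Disk :: "pt set" where
  "Disk = ball 0 1"

definition circ_par :: "real set" where
  "circ_par = {0..2*pi}"

definition bessel_J :: "nat \<Rightarrow> complex \<Rightarrow> complex" where
  "bessel_J n z = (\<Sum>m. (-1)^m / (fact m * fact (m + n)) * (z / 2) ^ (2 * m + n))"

text \<open>Classical partial derivatives (0 = in x, otherwise in y) and iterated ones.\<close>

definition pd :: "nat \<Rightarrow> (pt \<Rightarrow> complex) \<Rightarrow> pt \<Rightarrow> complex" where
  "pd i f p = (if i = 0 then vector_derivative (\<lambda>t. f (t, snd p)) (at (fst p))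
               else vector_derivative (\<lambda>t. f (fst p, t)) (at (snd p)))"

fun pds :: "nat list \<Rightarrow> (pt \<Rightarrow> complex) \<Rightarrow> pt \<Rightarrow> complex" where
  "pds [] f = f"
| "pds (i # w) f = pd i (pds w f)"

definition smooth2 :: "(pt \<Rightarrow> complex) \<Rightarrow> bool" where
  "smooth2 \<phi> \<longleftrightarrow> (\<forall>w. continuous_on UNIV (pds w \<phi>) \<and>
      (\<forall>p. (\<lambda>t. pds w \<phi> (t, snd p)) differentiable (at (fst p)) \<and>
           (\<lambda>t. pds w \<phi> (fst p, t)) differentiable (at (snd p))))"

definition test_D :: "(pt \<Rightarrow> complex) \<Rightarrow> bool" where
  "test_D \<phi> \<longleftrightarrow> smooth2 \<phi> \<and> compact (closure {p. \<phi> p \<noteq> 0}) \<and> closure {p. \<phi> p \<noteq> 0} \<subseteq> Disk"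

definition L2_on :: "'a::euclidean_space set \<Rightarrow> ('a \<Rightarrow> complex) \<Rightarrow> bool" where
  "L2_on S f \<longleftrightarrow> set_borel_measurable lborel S f \<and> set_integrable lborel S (\<lambda>x. (cmod (f x))\<^sup>2)"

text \<open>v is the weak derivative d^w u (multi-index given as a word w of partials) on D.\<close>

definition weak_pd :: "nat list \<Rightarrow> (pt \<Rightarrow> complex) \<Rightarrow> (pt \<Rightarrow> complex) \<Rightarrow> bool" where
  "weak_pd w u v \<longleftrightarrow> (\<forall>\<phi>. test_D \<phi> \<longrightarrow>
     set_lebesgue_integral lborel Disk (\<lambda>p. u p * pds w \<phi> p)
       = (-1) ^ length w * set_lebesgue_integral lborel Disk (\<lambda>p. v p * \<phi> p))"

definition weak_lap :: "(pt \<Rightarrow> complex) \<Rightarrow> (pt \<Rightarrow> complex) \<Rightarrow> bool" where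
  "weak_lap u v \<longleftrightarrow> (\<forall>\<phi>. test_D \<phi> \<longrightarrow>
     set_lebesgue_integral lborel Disk (\<lambda>p. u p * (pds [0,0] \<phi> p + pds [1,1] \<phi> p))
       = set_lebesgue_integral lborel Disk (\<lambda>p. v p * \<phi> p))"

definition H2_disk :: "(pt \<Rightarrow> complex) \<Rightarrow> bool" where
  "H2_disk u \<longleftrightarrow> L2_on Disk u \<and> (\<forall>w. length w \<le> 2 \<longrightarrow> (\<exists>v. L2_on Disk v \<and> weak_pd w u v))"

text \<open>Functions on the circle are 2pi-periodic functions of theta. Test functions:
  smooth 2pi-periodic functions.\<close>

definition vd :: "(real \<Rightarrow> complex) \<Rightarrow> real \<Rightarrow> complex" where
  "vd \<psi> = (\<lambda>t. vector_derivative \<psi> (at t))"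

definition test_circ :: "(real \<Rightarrow> complex) \<Rightarrow> bool" where
  "test_circ \<psi> \<longleftrightarrow> (\<forall>t. \<psi> (t + 2*pi) = \<psi> t) \<and> (\<forall>k t. ((vd ^^ k) \<psi>) differentiable (at t))"

definition weak_d_circ :: "nat \<Rightarrow> (real \<Rightarrow> complex) \<Rightarrow> (real \<Rightarrow> complex) \<Rightarrow> bool" where
  "weak_d_circ k g h \<longleftrightarrow> (\<forall>\<psi>. test_circ \<psi> \<longrightarrow>
     set_lebesgue_integral lborel circ_par (\<lambda>t. g t * (vd ^^ k) \<psi> t)
       = (-1) ^ k * set_lebesgue_integral lborel circ_par (\<lambda>t. h t * \<psi> t))"

definition H2_circ :: "(real \<Rightarrow> complex) \<Rightarrow> bool" where
  "H2_circ g \<longleftrightarrow> (\<forall>t. g (t + 2*pi) = g t) \<and> L2_on circ_par g \<and>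
     (\<forall>k\<le>2. \<exists>h. L2_on circ_par h \<and> weak_d_circ k g h)"

definition bd :: "(pt \<Rightarrow> complex) \<Rightarrow> real \<Rightarrow> complex" where
  "bd u \<theta> = u (cos \<theta>, sin \<theta>)"

text \<open>dom(A): u in H^2(D) (taken in its continuous representative on the closed disk,
  so that the trace is the restriction to the circle) whose trace lies in H^2(dD).\<close>

definition dom_A :: "(pt \<Rightarrow> complex) \<Rightarrow> bool" where
  "dom_A u \<longleftrightarrow> H2_disk u \<and> continuous_on (cball 0 1) u \<and> H2_circ (bd u)"

text \<open>h is the normal derivative d_r u on dD, defined weakly via Green's formula
  int_{dD} h phi = int_D (Laplace u) phi + int_D grad u . grad phi.\<close>

definition normal_deriv :: "(pt \<Rightarrow> complex) \<Rightarrow> (real \<Rightarrow> complex) \<Rightarrow> bool" where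
  "normal_deriv u h \<longleftrightarrow> L2_on circ_par h \<and>
     (\<exists>v1 v2 l. weak_pd [0] u v1 \<and> weak_pd [1] u v2 \<and> weak_lap u l \<and>
       (\<forall>\<phi>. smooth2 \<phi> \<longrightarrow>
          set_lebesgue_integral lborel circ_par (\<lambda>t. h t * \<phi> (cos t, sin t))
          = set_lebesgue_integral lborel Disk (\<lambda>p. l p * \<phi> p)
            + set_lebesgue_integral lborel Disk (\<lambda>p. v1 p * pd 0 \<phi> p + v2 p * pd 1 \<phi> p)))"

text \<open>Elements of H = L^2(D) x L^2(dD), their (a.e.) equality and norm.\<close>

definition inH :: "(pt \<Rightarrow> complex) \<Rightarrow> (real \<Rightarrow> complex) \<Rightarrow> bool" where
  "inH f g \<longleftrightarrow> L2_on Disk f \<and> L2_on circ_par g"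

definition eqH :: "(pt \<Rightarrow> complex) \<Rightarrow> (real \<Rightarrow> complex) \<Rightarrow> (pt \<Rightarrow> complex) \<Rightarrow> (real \<Rightarrow> complex) \<Rightarrow> bool" where
  "eqH f g f' g' \<longleftrightarrow> (AE p in lborel. p \<in> Disk \<longrightarrow> f p = f' p) \<and>
                     (AE t in lborel. t \<in> circ_par \<longrightarrow> g t = g' t)"

definition normH :: "(pt \<Rightarrow> complex) \<Rightarrow> (real \<Rightarrow> complex) \<Rightarrow> real" where
  "normH f g = sqrt (set_lebesgue_integral lborel Disk (\<lambda>p. (cmod (f p))\<^sup>2)
                    + set_lebesgue_integral lborel circ_par (\<lambda>t. (cmod (g t))\<^sup>2))"

text \<open>P z u = (f, g) for u in dom(A), where
  P(z) u = A u + z B B^* u + z^2 u = (-Laplace u + z^2 u, -d_theta^2 u + d_r u + z u + z^2 u) on dD.\<close>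

definition P_eq :: "complex \<Rightarrow> (pt \<Rightarrow> complex) \<Rightarrow> (pt \<Rightarrow> complex) \<Rightarrow> (real \<Rightarrow> complex) \<Rightarrow> bool" where
  "P_eq z u f g \<longleftrightarrow> dom_A u \<and>
     (\<exists>l. weak_lap u l \<and> (AE p in lborel. p \<in> Disk \<longrightarrow> - l p + z\<^sup>2 * u p = f p)) \<and>
     (\<exists>h d2. normal_deriv u h \<and> weak_d_circ 2 (bd u) d2 \<and>
        (AE t in lborel. t \<in> circ_par \<longrightarrow> - d2 t + h t + z * bd u t + z\<^sup>2 * bd u t = g t))"

text \<open>P(z) has an inverse in L(H): a map R : H -> dom(A) with P(z) R = id_H,
  R P(z) = id on dom(A) (up to equality in H), and R bounded.\<close>

definition P_invertible :: "complex \<Rightarrow> bool" where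
  "P_invertible z \<longleftrightarrow> (\<exists>R :: (pt \<Rightarrow> complex) \<Rightarrow> (real \<Rightarrow> complex) \<Rightarrow> (pt \<Rightarrow> complex).
     (\<forall>f g. inH f g \<longrightarrow> P_eq z (R f g) f g) \<and>
     (\<forall>u f g. inH f g \<longrightarrow> P_eq z u f g \<longrightarrow> eqH (R f g) (bd (R f g)) u (bd u)) \<and>
     (\<exists>C. \<forall>f g. inH f g \<longrightarrow> normH (R f g) (bd (R f g)) \<le> C * normH f g))"

definition spec_P :: "complex set" where
  "spec_P = {z. \<not> P_invertible z}"

definition mode_polar :: "nat \<Rightarrow> complex \<Rightarrow> real \<Rightarrow> real \<Rightarrow> complex" where
  "mode_polar n lam r \<theta> = bessel_J n (lam * of_real r) * exp (\<i> * of_nat n * of_real \<theta>)"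

definition mode :: "nat \<Rightarrow> complex \<Rightarrow> pt \<Rightarrow> complex" where
  "mode n lam p = mode_polar n lam (norm p) (Arg (Complex (fst p) (snd p)))"

end

theory Submission
  imports Defs
begin

(* Up to the factor c = (lam/2)^n, the mode J_n(lam r) e^(i n theta) is the restriction to the real
   plane of c (x + i y)^n E_n(mu (x^2 + y^2)) with mu = lam^2/4, where E_n is the entire function with
   J_n z = (z/2)^n E_n(z^2/4). This function is C^2 on the whole plane, so its weak derivatives on the
   disk are its classical ones: integration by parts against test functions, and Green's formula
   defining the normal derivative, reduce by Fubini and the fundamental theorem of calculus on
   vertical chords to integrals over the circle. The recurrence E_n = (n+1) E_(n+1) - x E_(n+2) gives
   Laplace u = -lam^2 u, and on the circle u, its radial derivative and its angular derivatives are
   multiples of e^(i n theta), so the boundary equation of P(i lam) u = 0 is exactly the hypothesis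
   on lam. As u is not zero almost everywhere, an inverse of P(i lam) would have to map 0 both to u
   and to 0; hence i lam lies in the spectrum. *)

section \<open>Green's formula on the unit disk\<close>

lemma Disk_iff: "(x, y) \<in> Disk \<longleftrightarrow> x\<^sup>2 + y\<^sup>2 < 1"
  by (simp add: Disk_def norm_Pair real_sqrt_lt_1_iff)

(* For |x| > 1 the interval is empty: sqrt is odd, so sqrt (1 - x^2) < 0. *)
lemma indicator_Disk_vertical:
  "indicator Disk (x, y) = (indicator {-sqrt (1 - x\<^sup>2)<..<sqrt (1 - x\<^sup>2)} y :: real)"
proof -
  have "(x, y) \<in> Disk \<longleftrightarrow> \<bar>y\<bar> < sqrt (1 - x\<^sup>2)"
    using real_sqrt_less_iff[of "y\<^sup>2" "1 - x\<^sup>2"] by (simp add: Disk_iff algebra_simps)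
  then show ?thesis by (auto simp: indicator_def abs_less_iff)
qed

lemma set_integrable_bounded_continuous:
  fixes f :: "'a::euclidean_space \<Rightarrow> 'b::{banach, second_countable_topology}"
  assumes "continuous_on UNIV f" and "S \<in> sets lborel" and "bounded S"
  shows "set_integrable lborel S f"
proof (rule set_integrable_subset)
  show "set_integrable lborel (closure S) f"
    unfolding set_integrable_def using assms(1,3)
    by (intro borel_integrable_compact) (auto intro: continuous_on_subset simp: compact_closure)
qed (use assms(2) closure_subset in auto)

lemma set_integrable_Disk:
  fixes f :: "pt \<Rightarrow> 'b::{banach, second_countable_topology}"
  shows "continuous_on UNIV f \<Longrightarrow> set_integrable lborel Disk f"
  by (rule set_integrable_bounded_continuous) (auto simp: Disk_def)

lemma set_integrable_circ_par:
  fixes f :: "real \<Rightarrow> 'b::{banach, second_countable_topology}"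
  shows "continuous_on UNIV f \<Longrightarrow> set_integrable lborel circ_par f"
  by (rule set_integrable_bounded_continuous) (auto simp: circ_par_def)

lemma L2_on_continuous:
  fixes f :: "'a::euclidean_space \<Rightarrow> complex"
  assumes "continuous_on UNIV f" and "S \<in> sets lborel" and "bounded S"
  shows "L2_on S f"
  unfolding L2_on_def set_borel_measurable_def
proof
  show "(\<lambda>x. indicator S x *\<^sub>R f x) \<in> borel_measurable lborel"
    using set_integrable_bounded_continuous[OF assms]
    unfolding set_integrable_def by (rule borel_measurable_integrable)
  show "set_integrable lborel S (\<lambda>x. (cmod (f x))\<^sup>2)"
    using assms by (intro set_integrable_bounded_continuous continuous_intros) auto
qed

lemma set_integral_Disk_iterated:
  fixes f :: "pt \<Rightarrow> complex"
  assumes "continuous_on UNIV f"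
  shows "set_lebesgue_integral lborel Disk f = (LBINT x. LBINT y. indicator Disk (x, y) *\<^sub>R f (x, y))"
proof -
  have "integrable (lborel \<Otimes>\<^sub>M lborel) (\<lambda>p. indicator Disk p *\<^sub>R f p)"
    using set_integrable_Disk[OF assms] by (simp add: set_integrable_def lborel_prod)
  from lborel_pair.integral_fst'[OF this] show ?thesis
    by (simp add: set_lebesgue_integral_def lborel_prod)
qed

lemma set_integral_Disk_swap:
  fixes f :: "pt \<Rightarrow> complex"
  assumes "continuous_on UNIV f"
  shows "set_lebesgue_integral lborel Disk f = set_lebesgue_integral lborel Disk (\<lambda>(x, y). f (y, x))"
proof -
  have "f \<in> borel_measurable borel"
    by (rule borel_measurable_continuous_onI[OF assms])
  then have integrand_measurable: "(\<lambda>p. indicator Disk p *\<^sub>R f p) \<in> borel_measurable (lborel \<Otimes>\<^sub>M lborel)"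
    unfolding lborel_prod
    by (intro borel_measurable_scaleR borel_measurable_indicator) (simp_all add: Disk_def)
  have swapped_integrand: "(\<lambda>(x, y). indicator Disk (y, x) *\<^sub>R f (y, x)) =
      (\<lambda>p. indicator Disk p *\<^sub>R (\<lambda>(x, y). f (y, x)) p :: complex)"
    by (auto simp: fun_eq_iff indicator_def Disk_iff add.commute)
  have "(\<integral>p. indicator Disk p *\<^sub>R (\<lambda>(x, y). f (y, x)) p \<partial>lborel) = (\<integral>p. indicator Disk p *\<^sub>R f p \<partial>lborel)"
    using lborel_pair.integral_product_swap[OF integrand_measurable]
    by (simp only: swapped_integrand lborel_prod)
  then show ?thesis
    by (simp only: set_lebesgue_integral_def)
qed

lemma integral_Disk_vertical_chord:
  fixes F Fy :: "pt \<Rightarrow> complex"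
  assumes "continuous_on UNIV Fy"
    and "\<And>x y. ((\<lambda>t. F (x, t)) has_vector_derivative Fy (x, y)) (at y)"
  shows "(LBINT y. indicator Disk (x, y) *\<^sub>R Fy (x, y)) =
    indicator {-1<..<1} x *\<^sub>R (F (x, sqrt (1 - x\<^sup>2)) - F (x, - sqrt (1 - x\<^sup>2)))"
proof (cases "\<bar>x\<bar> < 1")
  case True
  define s where "s = sqrt (1 - x\<^sup>2)"
  have "0 < s"
    unfolding s_def using True by (simp add: abs_square_less_1)
  have "(LBINT y. indicator Disk (x, y) *\<^sub>R Fy (x, y)) = (LBINT y=-s..s. Fy (x, y))"
    using \<open>0 < s\<close> by (simp add: interval_integral_Ioo set_lebesgue_integral_def indicator_Disk_vertical s_def)
  also have "\<dots> = F (x, s) - F (x, -s)"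
  proof (rule interval_integral_FTC_finite)
    show "continuous_on {min (- s) s..max (- s) s} (\<lambda>y. Fy (x, y))"
      by (intro continuous_on_compose2[OF assms(1)] continuous_intros) auto
  qed (use assms(2) has_vector_derivative_at_within in blast)
  finally show ?thesis
    using True by (simp add: s_def abs_less_iff)
next
  case False
  then have "1 - x\<^sup>2 \<le> 0"
    using abs_le_square_iff[of 1 x] by simp
  then have "indicator Disk (x, y) = (0 :: real)" for y
    by (simp add: indicator_Disk_vertical)
  moreover have "x \<notin> {-1<..<1}"
    using False by auto
  ultimately show ?thesis
    by simp
qed

lemma set_integral_Disk_vertical_chords:
  fixes F Fy :: "pt \<Rightarrow> complex"
  assumes "continuous_on UNIV Fy"
    and "\<And>x y. ((\<lambda>t. F (x, t)) has_vector_derivative Fy (x, y)) (at y)"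
  shows "set_lebesgue_integral lborel Disk Fy =
    (LBINT x=-1..1. F (x, sqrt (1 - x\<^sup>2)) - F (x, - sqrt (1 - x\<^sup>2)))"
  using set_integral_Disk_iterated[OF assms(1)] integral_Disk_vertical_chord[OF assms]
  by (simp add: interval_integral_Ioo set_lebesgue_integral_def one_ereal_def)

lemma set_integral_circ_par:
  "set_lebesgue_integral lborel circ_par f = (LBINT t=0..2*pi. f t)"
  unfolding circ_par_def by (simp add: interval_integral_Icc zero_ereal_def)

lemma interval_integral_sum_continuous:
  fixes f :: "real \<Rightarrow> complex" and a b c :: real
  assumes "continuous_on UNIV f"
  shows "(LBINT x=a..b. f x) + (LBINT x=b..c. f x) = (LBINT x=a..c. f x)"
  using assms
  by (intro interval_integral_sum)
     (auto simp: min_def max_def continuous_on_eq_continuous_at intro!: interval_integrable_isCont)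

lemma interval_integral_sin_cos:
  fixes f :: "real \<Rightarrow> complex"
  assumes "a \<le> b" and "continuous_on UNIV f"
  shows "(LBINT t=a..b. sin t *\<^sub>R f (cos t)) = (LBINT y=cos b..cos a. f y)"
proof -
  have "(LBINT t=a..b. (- sin t) *\<^sub>R f (cos t)) = (LBINT y=cos a..cos b. f y)"
    using assms
    by (intro interval_integral_substitution_finite)
       (auto intro!: derivative_eq_intros continuous_intros intro: continuous_on_subset)
  then show ?thesis
    by (simp add: interval_lebesgue_integral_uminus interval_integral_endpoints_reverse[of "cos a"])
qed

lemma sqrt_one_minus_cos_squared: "sqrt (1 - (cos t)\<^sup>2) = \<bar>sin t\<bar>"
  by (simp add: sin_squared_eq[symmetric])

lemma integral_upper_semicircle:
  fixes F :: "pt \<Rightarrow> complex"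
  assumes "continuous_on UNIV F"
  shows "(LBINT t=0..pi. sin t *\<^sub>R F (cos t, sin t)) = (LBINT x=-1..1. F (x, sqrt (1 - x\<^sup>2)))"
proof -
  have "(LBINT t=0..pi. sin t *\<^sub>R F (cos t, sin t)) = (LBINT t=0..pi. sin t *\<^sub>R F (cos t, sqrt (1 - (cos t)\<^sup>2)))"
  proof (rule interval_integral_cong)
    fix t assume "t \<in> einterval (min 0 (ereal pi)) (max 0 (ereal pi))"
    then have "0 \<le> sin t"
      by (intro sin_ge_zero) (auto simp: einterval_iff min_def max_def)
    then show "sin t *\<^sub>R F (cos t, sin t) = sin t *\<^sub>R F (cos t, sqrt (1 - (cos t)\<^sup>2))"
      by (simp add: sqrt_one_minus_cos_squared)
  qed
  also have "\<dots> = (LBINT x=-1..1. F (x, sqrt (1 - x\<^sup>2)))"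
    using interval_integral_sin_cos[of 0 pi "\<lambda>x. F (x, sqrt (1 - x\<^sup>2))"] assms
    by (simp add: zero_ereal_def one_ereal_def continuous_on_compose2[OF assms] continuous_intros)
  finally show ?thesis .
qed

lemma integral_lower_semicircle:
  fixes F :: "pt \<Rightarrow> complex"
  assumes "continuous_on UNIV F"
  shows "(LBINT t=pi..2*pi. sin t *\<^sub>R F (cos t, sin t)) = - (LBINT x=-1..1. F (x, - sqrt (1 - x\<^sup>2)))"
proof -
  have "(LBINT t=pi..2*pi. sin t *\<^sub>R F (cos t, sin t)) =
      (LBINT t=pi..2*pi. sin t *\<^sub>R F (cos t, - sqrt (1 - (cos t)\<^sup>2)))"
  proof (rule interval_integral_cong)
    fix t assume "t \<in> einterval (min (ereal pi) (ereal (2*pi))) (max (ereal pi) (ereal (2*pi)))"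
    then have "0 \<le> sin (t - pi)"
      by (intro sin_ge_zero) (auto simp: einterval_iff min_def max_def)
    then have "sin t \<le> 0"
      by (simp add: sin_diff)
    then show "sin t *\<^sub>R F (cos t, sin t) = sin t *\<^sub>R F (cos t, - sqrt (1 - (cos t)\<^sup>2))"
      by (simp add: sqrt_one_minus_cos_squared)
  qed
  also have "\<dots> = - (LBINT x=-1..1. F (x, - sqrt (1 - x\<^sup>2)))"
    using interval_integral_sin_cos[of pi "2*pi" "\<lambda>x. F (x, - sqrt (1 - x\<^sup>2))"] assms
    by (simp add: one_ereal_def interval_integral_endpoints_reverse[of "ereal 1"]
        continuous_on_compose2[OF assms] continuous_intros)
  finally show ?thesis .
qed

lemma set_integral_circ_par_sin:
  fixes F :: "pt \<Rightarrow> complex"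
  assumes "continuous_on UNIV F"
  shows "set_lebesgue_integral lborel circ_par (\<lambda>t. sin t *\<^sub>R F (cos t, sin t)) =
    (LBINT x=-1..1. F (x, sqrt (1 - x\<^sup>2)) - F (x, - sqrt (1 - x\<^sup>2)))"
proof -
  have cont: "continuous_on UNIV (\<lambda>x. F (x, sqrt (1 - x\<^sup>2)))" "continuous_on UNIV (\<lambda>x. F (x, - sqrt (1 - x\<^sup>2)))"
    "continuous_on UNIV (\<lambda>t. sin t *\<^sub>R F (cos t, sin t))"
    by (intro continuous_on_compose2[OF assms] continuous_intros; simp)+
  have "set_lebesgue_integral lborel circ_par (\<lambda>t. sin t *\<^sub>R F (cos t, sin t))
      = (LBINT t=0..pi. sin t *\<^sub>R F (cos t, sin t)) + (LBINT t=pi..2*pi. sin t *\<^sub>R F (cos t, sin t))"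
    unfolding set_integral_circ_par
    using interval_integral_sum_continuous[OF cont(3), of 0 pi "2*pi"] by (simp add: zero_ereal_def)
  also have "\<dots> = (LBINT x=-1..1. F (x, sqrt (1 - x\<^sup>2)) - F (x, - sqrt (1 - x\<^sup>2)))"
    unfolding integral_upper_semicircle[OF assms] integral_lower_semicircle[OF assms] using cont(1,2)
    by (subst interval_lebesgue_integral_diff(2))
       (auto intro!: interval_integrable_continuous_on intro: continuous_on_subset simp: one_ereal_def)
  finally show ?thesis .
qed

lemma interval_integral_periodic_shift:
  fixes h :: "real \<Rightarrow> complex" and a :: real
  assumes "continuous_on UNIV h" and "\<And>t. h (t + 2*pi) = h t"
    and "-2*pi \<le> a" and "a \<le> 0"
  shows "(LBINT t=a..a+2*pi. h t) = (LBINT t=0..2*pi. h t)"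
proof -
  have "(LBINT t=a..ereal 0. 1 *\<^sub>R h (t + 2*pi)) = (LBINT t=a+2*pi..0+2*pi. h t)"
    using assms(1,4)
    by (intro interval_integral_substitution_finite)
       (auto intro!: derivative_eq_intros intro: continuous_on_subset)
  then have "(LBINT t=a..ereal 0. h t) = (LBINT t=a+2*pi..2*pi. h t)"
    by (simp add: assms(2))
  then show ?thesis
    using interval_integral_sum_continuous[OF assms(1), of a 0 "a+2*pi"]
      interval_integral_sum_continuous[OF assms(1), of 0 "a+2*pi" "2*pi"]
    by (simp add: zero_ereal_def add.commute)
qed

lemma set_integral_circ_par_swap:
  fixes F :: "pt \<Rightarrow> complex"
  assumes "continuous_on UNIV F"
  shows "set_lebesgue_integral lborel circ_par (\<lambda>t. sin t *\<^sub>R F (sin t, cos t)) =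
    set_lebesgue_integral lborel circ_par (\<lambda>t. cos t *\<^sub>R F (cos t, sin t))"
proof -
  define h where "h t = cos t *\<^sub>R F (cos t, sin t)" for t
  have cont: "continuous_on UNIV h"
    unfolding h_def by (intro continuous_on_compose2[OF assms] continuous_intros) auto
  have per: "h (t + 2*pi) = h t" for t
    by (simp add: h_def)
  \<comment> \<open>The substitution \<open>t = pi/2 - s\<close> exchanges cos and sin and moves the period to \<open>[-3pi/2, pi/2]\<close>.\<close>
  have "(LBINT t=ereal 0..2*pi. (-1) *\<^sub>R h (pi/2 - t)) = (LBINT s=pi/2 - 0..pi/2 - 2*pi. h s)"
    using cont
    by (intro interval_integral_substitution_finite)
       (auto intro!: derivative_eq_intros intro: continuous_on_subset)
  then have "(LBINT t=0..2*pi. sin t *\<^sub>R F (sin t, cos t)) = (LBINT s=-3*pi/2..-3*pi/2+2*pi. h s)"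
    by (simp add: h_def cos_diff sin_diff interval_lebesgue_integral_uminus
        interval_integral_endpoints_reverse[of "ereal (pi/2)"] zero_ereal_def)
  also have "\<dots> = (LBINT s=0..2*pi. h s)"
    by (rule interval_integral_periodic_shift[OF cont per]) auto
  finally show ?thesis
    unfolding set_integral_circ_par h_def .
qed

theorem Green_Disk_y:
  fixes F Fy :: "pt \<Rightarrow> complex"
  assumes "continuous_on UNIV F" and "continuous_on UNIV Fy"
    and "\<And>x y. ((\<lambda>t. F (x, t)) has_vector_derivative Fy (x, y)) (at y)"
  shows "set_lebesgue_integral lborel Disk Fy =
    set_lebesgue_integral lborel circ_par (\<lambda>t. sin t *\<^sub>R F (cos t, sin t))"
  using set_integral_Disk_vertical_chords[OF assms(2,3)] set_integral_circ_par_sin[OF assms(1)]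
  by simp

theorem Green_Disk_x:
  fixes F Fx :: "pt \<Rightarrow> complex"
  assumes "continuous_on UNIV F" and "continuous_on UNIV Fx"
    and "\<And>x y. ((\<lambda>t. F (t, y)) has_vector_derivative Fx (x, y)) (at x)"
  shows "set_lebesgue_integral lborel Disk Fx =
    set_lebesgue_integral lborel circ_par (\<lambda>t. cos t *\<^sub>R F (cos t, sin t))"
proof -
  have swap_cont: "continuous_on UNIV (\<lambda>(x, y). G (y, x))" if "continuous_on UNIV G" for G :: "pt \<Rightarrow> complex"
    unfolding case_prod_unfold by (intro continuous_on_compose2[OF that] continuous_intros) auto
  have "set_lebesgue_integral lborel Disk Fx = set_lebesgue_integral lborel Disk (\<lambda>(x, y). Fx (y, x))"
    by (rule set_integral_Disk_swap[OF assms(2)])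
  also have "\<dots> = set_lebesgue_integral lborel circ_par (\<lambda>t. sin t *\<^sub>R F (sin t, cos t))"
    using Green_Disk_y[where F = "\<lambda>(x, y). F (y, x)", OF swap_cont swap_cont] assms by simp
  also have "\<dots> = set_lebesgue_integral lborel circ_par (\<lambda>t. cos t *\<^sub>R F (cos t, sin t))"
    by (rule set_integral_circ_par_swap[OF assms(1)])
  finally show ?thesis .
qed

section \<open>Partial derivatives, test functions and weak derivatives\<close>

lemma pd_neq_0: "i \<noteq> 0 \<Longrightarrow> pd i = pd 1"
  by (simp add: pd_def fun_eq_iff)

lemma pd_eqI_x:
  "((\<lambda>t. V (t, y)) has_vector_derivative D) (at x) \<Longrightarrow> pd 0 V (x, y) = D"
  by (simp add: pd_def vector_derivative_at)

lemma pd_eqI_y: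
  "((\<lambda>t. V (x, t)) has_vector_derivative D) (at y) \<Longrightarrow> i \<noteq> 0 \<Longrightarrow> pd i V (x, y) = D"
  by (simp add: pd_def vector_derivative_at)

definition C1_partials :: "(pt \<Rightarrow> complex) \<Rightarrow> bool" where
  "C1_partials V \<longleftrightarrow> continuous_on UNIV V \<and> (\<forall>i. continuous_on UNIV (pd i V)) \<and>
     (\<forall>x y. (\<lambda>t. V (t, y)) differentiable at x \<and> (\<lambda>t. V (x, t)) differentiable at y)"

lemma C1_partials_continuous:
  "C1_partials V \<Longrightarrow> continuous_on UNIV V"
  "C1_partials V \<Longrightarrow> continuous_on UNIV (pd i V)"
  by (simp_all add: C1_partials_def)

lemma C1_partials_has_derivative_x:
  "C1_partials V \<Longrightarrow> ((\<lambda>t. V (t, y)) has_vector_derivative pd 0 V (x, y)) (at x)"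
  unfolding C1_partials_def pd_def by (simp add: vector_derivative_works)

lemma C1_partials_has_derivative_y:
  "C1_partials V \<Longrightarrow> ((\<lambda>t. V (x, t)) has_vector_derivative pd 1 V (x, y)) (at y)"
  unfolding C1_partials_def pd_def by (simp add: vector_derivative_works)

lemma pd_mult:
  assumes "C1_partials V" and "C1_partials W"
  shows "pd i (\<lambda>p. V p * W p) = (\<lambda>p. V p * pd i W p + pd i V p * W p)"
proof
  fix p :: pt
  obtain x y where p: "p = (x, y)" by fastforce
  show "pd i (\<lambda>p. V p * W p) p = V p * pd i W p + pd i V p * W p"
  proof (cases "i = 0")
    case True
    with has_vector_derivative_mult[OF C1_partials_has_derivative_x[OF assms(1)]
        C1_partials_has_derivative_x[OF assms(2)]]
    show ?thesis unfolding p by (auto intro: pd_eqI_x)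
  next
    case False
    with has_vector_derivative_mult[OF C1_partials_has_derivative_y[OF assms(1)]
        C1_partials_has_derivative_y[OF assms(2)]]
    show ?thesis unfolding p pd_neq_0[OF False] by (auto intro: pd_eqI_y)
  qed
qed

lemma C1_partials_mult:
  assumes "C1_partials V" and "C1_partials W"
  shows "C1_partials (\<lambda>p. V p * W p)"
proof -
  have "continuous_on UNIV (\<lambda>p. V p * W p)"
    using assms by (intro continuous_intros C1_partials_continuous)
  moreover have "continuous_on UNIV (pd i (\<lambda>p. V p * W p))" for i
    unfolding pd_mult[OF assms] using assms by (intro continuous_intros C1_partials_continuous)
  moreover have "(\<lambda>t. V (t, y) * W (t, y)) differentiable at x \<and> (\<lambda>t. V (x, t) * W (x, t)) differentiable at y"
    for x y
  proof -
    have "(\<lambda>t. V (t, y)) differentiable at x" "(\<lambda>t. W (t, y)) differentiable at x"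
      "(\<lambda>t. V (x, t)) differentiable at y" "(\<lambda>t. W (x, t)) differentiable at y"
      using assms unfolding C1_partials_def by blast+
    then show ?thesis
      by (simp add: differentiable_mult)
  qed
  ultimately show ?thesis
    unfolding C1_partials_def by blast
qed

theorem Green_Disk_pd:
  assumes "C1_partials V"
  shows "set_lebesgue_integral lborel Disk (pd i V) =
    set_lebesgue_integral lborel circ_par (\<lambda>t. (if i = 0 then cos t else sin t) *\<^sub>R V (cos t, sin t))"
proof (cases "i = 0")
  case True
  then show ?thesis
    using Green_Disk_x[OF C1_partials_continuous[OF assms] C1_partials_has_derivative_x[OF assms]] by simp
next
  case False
  then show ?thesis
    using Green_Disk_y[OF C1_partials_continuous[OF assms] C1_partials_has_derivative_y[OF assms]]
    unfolding pd_neq_0[OF False] by simp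
qed

lemma set_integral_Disk_add:
  fixes f g :: "pt \<Rightarrow> complex"
  assumes "continuous_on UNIV f" and "continuous_on UNIV g"
  shows "set_lebesgue_integral lborel Disk (\<lambda>p. f p + g p) =
    set_lebesgue_integral lborel Disk f + set_lebesgue_integral lborel Disk g"
  using assms by (intro set_integral_add(2) set_integrable_Disk)

lemma set_integral_circ_par_add:
  fixes f g :: "real \<Rightarrow> complex"
  assumes "continuous_on UNIV f" and "continuous_on UNIV g"
  shows "set_lebesgue_integral lborel circ_par (\<lambda>t. f t + g t) =
    set_lebesgue_integral lborel circ_par f + set_lebesgue_integral lborel circ_par g"
  using assms by (intro set_integral_add(2) set_integrable_circ_par)

lemma Green_Disk_mult:
  assumes "C1_partials V" and "C1_partials W"
  shows "set_lebesgue_integral lborel Disk (\<lambda>p. V p * pd i W p) + set_lebesgue_integral lborel Disk (\<lambda>p. pd i V p * W p) =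
    set_lebesgue_integral lborel circ_par
      (\<lambda>t. (if i = 0 then cos t else sin t) *\<^sub>R (V (cos t, sin t) * W (cos t, sin t)))"
proof -
  note cont = C1_partials_continuous[OF assms(1)] C1_partials_continuous[OF assms(2)]
  have "set_lebesgue_integral lborel Disk (\<lambda>p. V p * pd i W p) + set_lebesgue_integral lborel Disk (\<lambda>p. pd i V p * W p) =
      set_lebesgue_integral lborel Disk (pd i (\<lambda>p. V p * W p))"
    unfolding pd_mult[OF assms] using cont
    by (intro set_integral_Disk_add[symmetric] continuous_intros)
  also have "\<dots> = set_lebesgue_integral lborel circ_par
      (\<lambda>t. (if i = 0 then cos t else sin t) *\<^sub>R (V (cos t, sin t) * W (cos t, sin t)))"
    by (rule Green_Disk_pd[OF C1_partials_mult[OF assms]])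
  finally show ?thesis .
qed

lemma integral_Disk_by_parts:
  assumes "C1_partials V" and "C1_partials W" and "\<And>t. W (cos t, sin t) = 0"
  shows "set_lebesgue_integral lborel Disk (\<lambda>p. V p * pd i W p) =
    - set_lebesgue_integral lborel Disk (\<lambda>p. pd i V p * W p)"
  using Green_Disk_mult[OF assms(1,2), of i] by (simp add: assms(3) eq_neg_iff_add_eq_0)

lemma pd_eq_0_on_open:
  assumes "open S" and "\<And>q. q \<in> S \<Longrightarrow> V q = 0" and "p \<in> S"
  shows "pd i V p = 0"
proof -
  obtain x y where p: "p = (x, y)" by fastforce
  have "((\<lambda>t. V (t, y)) has_vector_derivative 0) (at x)"
  proof (rule has_vector_derivative_transform_within_open[where f = "\<lambda>_. 0"])
    show "open ((\<lambda>t. (t, y)) -` S)"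
      by (intro continuous_open_vimage assms(1) continuous_intros)
  qed (use assms p in auto)
  moreover have "((\<lambda>t. V (x, t)) has_vector_derivative 0) (at y)"
  proof (rule has_vector_derivative_transform_within_open[where f = "\<lambda>_. 0"])
    show "open ((\<lambda>t. (x, t)) -` S)"
      by (intro continuous_open_vimage assms(1) continuous_intros)
  qed (use assms p in auto)
  ultimately show ?thesis
    unfolding p by (cases "i = 0") (auto intro: pd_eqI_x pd_eqI_y)
qed

lemma pds_eq_0_outside_support:
  "p \<notin> closure {q. \<phi> q \<noteq> 0} \<Longrightarrow> pds w \<phi> p = 0"
proof (induction w arbitrary: p)
  case Nil
  then have "\<phi> p = 0"
    by (meson closure_subset mem_Collect_eq subsetD)
  then show ?case
    by simp
next
  case (Cons i w)
  have "pd i (pds w \<phi>) p = 0"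
    by (rule pd_eq_0_on_open[of "- closure {q. \<phi> q \<noteq> 0}"]) (use Cons in \<open>simp_all add: open_Compl\<close>)
  then show ?case
    by simp
qed

lemma test_D_vanishes_on_circle:
  assumes "test_D \<phi>"
  shows "pds w \<phi> (cos t, sin t) = 0"
proof (rule pds_eq_0_outside_support)
  have "closure {q. \<phi> q \<noteq> 0} \<subseteq> Disk"
    using assms by (simp add: test_D_def)
  moreover have "(cos t, sin t) \<notin> Disk"
    by (simp add: Disk_iff)
  ultimately show "(cos t, sin t) \<notin> closure {q. \<phi> q \<noteq> 0}"
    by blast
qed

lemma smooth2_C1_partials:
  assumes "smooth2 \<phi>"
  shows "C1_partials (pds w \<phi>)"
proof -
  have "continuous_on UNIV (pds v \<phi>)" for v
    using assms by (simp add: smooth2_def)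
  moreover have "(\<lambda>t. pds w \<phi> (t, y)) differentiable at x \<and> (\<lambda>t. pds w \<phi> (x, t)) differentiable at y" for x y
    using assms unfolding smooth2_def by (metis fst_conv snd_conv)
  ultimately show ?thesis
    unfolding C1_partials_def by (metis pds.simps(2))
qed

lemma pds_append: "pds (v @ u) f = pds v (pds u f)"
  by (induction v) auto

lemma weak_pd_pds:
  assumes "\<And>v. length v < length w \<Longrightarrow> C1_partials (pds v U)"
  shows "weak_pd w U (pds (rev w) U)"
  using assms
proof (induction w arbitrary: U)
  case Nil
  then show ?case
    by (simp add: weak_pd_def)
next
  case (Cons i w)
  have U: "C1_partials U"
    using Cons.prems[of "[]"] by simp
  have IH: "weak_pd w (pd i U) (pds (rev w) (pd i U))"
    by (rule Cons.IH) (use Cons.prems[of "_ @ [i]"] in \<open>simp add: pds_append\<close>)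
  show ?case
    unfolding weak_pd_def
  proof (intro allI impI)
    fix \<phi> assume \<phi>: "test_D \<phi>"
    then have "C1_partials (pds w \<phi>)"
      by (simp add: test_D_def smooth2_C1_partials)
    from integral_Disk_by_parts[OF U this test_D_vanishes_on_circle[OF \<phi>]]
    have "set_lebesgue_integral lborel Disk (\<lambda>p. U p * pds (i # w) \<phi> p) =
        - set_lebesgue_integral lborel Disk (\<lambda>p. pd i U p * pds w \<phi> p)"
      by simp
    also have "set_lebesgue_integral lborel Disk (\<lambda>p. pd i U p * pds w \<phi> p) =
        (-1) ^ length w * set_lebesgue_integral lborel Disk (\<lambda>p. pds (rev w) (pd i U) p * \<phi> p)"
      using IH \<phi> unfolding weak_pd_def by blast
    finally show "set_lebesgue_integral lborel Disk (\<lambda>p. U p * pds (i # w) \<phi> p) =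
        (-1) ^ length (i # w) * set_lebesgue_integral lborel Disk (\<lambda>p. pds (rev (i # w)) U p * \<phi> p)"
      by (simp add: pds_append)
  qed
qed

definition C2_partials :: "(pt \<Rightarrow> complex) \<Rightarrow> bool" where
  "C2_partials U \<longleftrightarrow> C1_partials U \<and> (\<forall>i. C1_partials (pd i U))"

lemma C2_partials_pds:
  assumes "C2_partials U" and "length v < 2"
  shows "C1_partials (pds v U)"
  using assms by (cases v) (auto simp: C2_partials_def)

lemma C2_partials_continuous_pds:
  assumes "C2_partials U" and "length w \<le> 2"
  shows "continuous_on UNIV (pds w U)"
proof (cases w)
  case Nil
  then show ?thesis
    using assms(1) by (simp add: C2_partials_def C1_partials_continuous)
next
  case (Cons i v)
  then show ?thesis
    using C2_partials_pds[OF assms(1), of v] assms(2) by (simp add: C1_partials_continuous)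
qed

lemma H2_disk_C2_partials:
  assumes "C2_partials U"
  shows "H2_disk U"
  unfolding H2_disk_def
proof (intro conjI allI impI exI)
  show "L2_on Disk U"
    using C2_partials_continuous_pds[OF assms, of "[]"] by (intro L2_on_continuous) (auto simp: Disk_def)
  fix w :: "nat list" assume "length w \<le> 2"
  then show "L2_on Disk (pds (rev w) U)"
    using C2_partials_continuous_pds[OF assms, of "rev w"] by (intro L2_on_continuous) (auto simp: Disk_def)
  show "weak_pd w U (pds (rev w) U)"
    using \<open>length w \<le> 2\<close> by (intro weak_pd_pds C2_partials_pds[OF assms]) simp
qed

definition laplacian :: "(pt \<Rightarrow> complex) \<Rightarrow> pt \<Rightarrow> complex" where
  "laplacian U p = pd 0 (pd 0 U) p + pd 1 (pd 1 U) p"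

lemma weak_lap_C2_partials:
  assumes "C2_partials U"
  shows "weak_lap U (laplacian U)"
  unfolding weak_lap_def
proof (intro allI impI)
  fix \<phi> assume \<phi>: "test_D \<phi>"
  then have cont_\<phi>: "continuous_on UNIV (pds w \<phi>)" for w
    by (simp add: test_D_def smooth2_def)
  have cont_U: "continuous_on UNIV (pds w U)" if "length w \<le> 2" for w
    using C2_partials_continuous_pds[OF assms that] .
  have weak: "weak_pd [i, i] U (pds [i, i] U)" for i
    using weak_pd_pds[of "[i, i]" U] C2_partials_pds[OF assms] by simp
  have "set_lebesgue_integral lborel Disk (\<lambda>p. U p * (pds [0, 0] \<phi> p + pds [1, 1] \<phi> p)) =
      set_lebesgue_integral lborel Disk (\<lambda>p. U p * pds [0, 0] \<phi> p) +
      set_lebesgue_integral lborel Disk (\<lambda>p. U p * pds [1, 1] \<phi> p)"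
    unfolding distrib_left
    using cont_\<phi>[of "[0, 0]"] cont_\<phi>[of "[1, 1]"] cont_U[of "[]"]
    by (intro set_integral_Disk_add continuous_intros) auto
  also have "\<dots> = set_lebesgue_integral lborel Disk (\<lambda>p. pds [0, 0] U p * \<phi> p) +
      set_lebesgue_integral lborel Disk (\<lambda>p. pds [1, 1] U p * \<phi> p)"
    using weak[of 0] weak[of 1] \<phi> unfolding weak_pd_def by simp
  also have "\<dots> = set_lebesgue_integral lborel Disk (\<lambda>p. pds [0, 0] U p * \<phi> p + pds [1, 1] U p * \<phi> p)"
    using cont_\<phi>[of "[]"] cont_U[of "[0, 0]"] cont_U[of "[1, 1]"]
    by (intro set_integral_Disk_add[symmetric] continuous_intros) auto
  also have "\<dots> = set_lebesgue_integral lborel Disk (\<lambda>p. laplacian U p * \<phi> p)"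
    by (simp add: laplacian_def distrib_right)
  finally show "set_lebesgue_integral lborel Disk (\<lambda>p. U p * (pds [0, 0] \<phi> p + pds [1, 1] \<phi> p)) =
      set_lebesgue_integral lborel Disk (\<lambda>p. laplacian U p * \<phi> p)" .
qed

definition radial_deriv :: "(pt \<Rightarrow> complex) \<Rightarrow> real \<Rightarrow> complex" where
  "radial_deriv U t = of_real (cos t) * pd 0 U (cos t, sin t) + of_real (sin t) * pd 1 U (cos t, sin t)"

lemma Green_identity_C2_partials:
  assumes "C2_partials U" and "smooth2 \<phi>"
  shows "set_lebesgue_integral lborel circ_par (\<lambda>t. radial_deriv U t * \<phi> (cos t, sin t)) =
    set_lebesgue_integral lborel Disk (\<lambda>p. laplacian U p * \<phi> p) +
    set_lebesgue_integral lborel Disk (\<lambda>p. pd 0 U p * pd 0 \<phi> p + pd 1 U p * pd 1 \<phi> p)"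
proof -
  have \<phi>: "C1_partials \<phi>"
    using smooth2_C1_partials[OF assms(2), of "[]"] by simp
  have U: "C1_partials (pd i U)" for i
    using assms(1) by (simp add: C2_partials_def)
  note cont = C1_partials_continuous[OF \<phi>] C1_partials_continuous[OF U]
  have cont_circ: "continuous_on UNIV (\<lambda>t. f (cos t, sin t))" if "continuous_on UNIV f" for f :: "pt \<Rightarrow> complex"
    by (intro continuous_on_compose2[OF that] continuous_intros) auto
  have "set_lebesgue_integral lborel circ_par (\<lambda>t. radial_deriv U t * \<phi> (cos t, sin t)) =
      set_lebesgue_integral lborel circ_par (\<lambda>t. cos t *\<^sub>R (pd 0 U (cos t, sin t) * \<phi> (cos t, sin t)) +
        sin t *\<^sub>R (pd 1 U (cos t, sin t) * \<phi> (cos t, sin t)))"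
    by (simp add: radial_deriv_def scaleR_conv_of_real algebra_simps)
  also have "\<dots> = set_lebesgue_integral lborel circ_par (\<lambda>t. cos t *\<^sub>R (pd 0 U (cos t, sin t) * \<phi> (cos t, sin t))) +
      set_lebesgue_integral lborel circ_par (\<lambda>t. sin t *\<^sub>R (pd 1 U (cos t, sin t) * \<phi> (cos t, sin t)))"
    by (intro set_integral_circ_par_add continuous_intros cont_circ[OF cont(1)] cont_circ[OF cont(3)])
  also have "\<dots> = (set_lebesgue_integral lborel Disk (\<lambda>p. pd 0 U p * pd 0 \<phi> p) +
        set_lebesgue_integral lborel Disk (\<lambda>p. pd 0 (pd 0 U) p * \<phi> p)) +
      (set_lebesgue_integral lborel Disk (\<lambda>p. pd 1 U p * pd 1 \<phi> p) +
        set_lebesgue_integral lborel Disk (\<lambda>p. pd 1 (pd 1 U) p * \<phi> p))"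
    using Green_Disk_mult[OF U[of 0] \<phi>, of 0] Green_Disk_mult[OF U[of 1] \<phi>, of 1] by simp
  also have "\<dots> = set_lebesgue_integral lborel Disk (\<lambda>p. laplacian U p * \<phi> p) +
      set_lebesgue_integral lborel Disk (\<lambda>p. pd 0 U p * pd 0 \<phi> p + pd 1 U p * pd 1 \<phi> p)"
  proof -
    have "set_lebesgue_integral lborel Disk (\<lambda>p. laplacian U p * \<phi> p) =
        set_lebesgue_integral lborel Disk (\<lambda>p. pd 0 (pd 0 U) p * \<phi> p) +
        set_lebesgue_integral lborel Disk (\<lambda>p. pd 1 (pd 1 U) p * \<phi> p)"
      unfolding laplacian_def distrib_right using cont by (intro set_integral_Disk_add continuous_intros)
    moreover have "set_lebesgue_integral lborel Disk (\<lambda>p. pd 0 U p * pd 0 \<phi> p + pd 1 U p * pd 1 \<phi> p) =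
        set_lebesgue_integral lborel Disk (\<lambda>p. pd 0 U p * pd 0 \<phi> p) +
        set_lebesgue_integral lborel Disk (\<lambda>p. pd 1 U p * pd 1 \<phi> p)"
      using cont by (intro set_integral_Disk_add continuous_intros)
    ultimately show ?thesis
      by (simp only: ac_simps)
  qed
  finally show ?thesis .
qed

lemma normal_deriv_C2_partials:
  assumes "C2_partials U"
  shows "normal_deriv U (radial_deriv U)"
  unfolding normal_deriv_def
proof (intro conjI exI allI impI)
  have cont: "continuous_on UNIV (pd i U)" for i
    using assms by (simp add: C2_partials_def C1_partials_continuous)
  have "continuous_on UNIV (\<lambda>t. pd i U (cos t, sin t))" for i
    by (intro continuous_on_compose2[OF cont] continuous_intros) auto
  then have "continuous_on UNIV (radial_deriv U)"
    unfolding radial_deriv_def by (intro continuous_intros)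
  then show "L2_on circ_par (radial_deriv U)"
    by (rule L2_on_continuous) (auto simp: circ_par_def)
  have "weak_pd [i] U (pd i U)" for i
    using weak_pd_pds[of "[i]" U] C2_partials_pds[OF assms, of "[]"] by simp
  then show "weak_pd [0] U (pd 0 U)" and "weak_pd [1] U (pd 1 U)"
    by blast+
  show "weak_lap U (laplacian U)"
    by (rule weak_lap_C2_partials[OF assms])
qed (rule Green_identity_C2_partials[OF assms])

section \<open>Fourier modes on the circle\<close>

definition fourier_mode :: "nat \<Rightarrow> real \<Rightarrow> complex" where
  "fourier_mode n t = exp (\<i> * of_nat n * of_real t)"

lemma fourier_mode_periodic: "fourier_mode n (t + 2*pi) = fourier_mode n t"
proof -
  have "exp (\<i> * of_nat n * of_real (2*pi)) = exp (2 * pi * \<i>) ^ n"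
    by (simp flip: exp_of_nat_mult add: algebra_simps)
  then show ?thesis
    by (simp add: fourier_mode_def distrib_left exp_add)
qed

lemma has_vector_derivative_fourier_mode:
  "((\<lambda>t. \<beta> * fourier_mode n t) has_vector_derivative \<i> * of_nat n * \<beta> * fourier_mode n t) (at t)"
proof -
  have "((\<lambda>z. \<beta> * exp (\<i> * of_nat n * z)) has_field_derivative \<i> * of_nat n * \<beta> * exp (\<i> * of_nat n * of_real t))
      (at (of_real t))"
    by (auto intro!: derivative_eq_intros simp: algebra_simps)
  from has_vector_derivative_real_field[OF this] show ?thesis
    by (simp add: fourier_mode_def)
qed

lemma continuous_on_fourier_mode: "continuous_on UNIV (\<lambda>t. \<beta> * fourier_mode n t)"
  unfolding fourier_mode_def by (intro continuous_intros)

lemma integral_circ_par_by_parts: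
  fixes g h :: "real \<Rightarrow> complex"
  assumes "\<And>t. (g has_vector_derivative g' t) (at t)" and "continuous_on UNIV g'"
    and "\<And>t. (h has_vector_derivative h' t) (at t)" and "continuous_on UNIV h'"
    and "g (2*pi) * h (2*pi) = g 0 * h 0"
  shows "set_lebesgue_integral lborel circ_par (\<lambda>t. g t * h' t) =
    - set_lebesgue_integral lborel circ_par (\<lambda>t. g' t * h t)"
proof -
  have cont: "continuous_on UNIV g" "continuous_on UNIV h"
    using assms(1,3) has_vector_derivative_continuous
    by (blast intro: continuous_at_imp_continuous_on)+
  have "(LBINT t=ereal 0..2*pi. g t * h' t + g' t * h t) = g (2*pi) * h (2*pi) - g 0 * h 0"
  proof (rule interval_integral_FTC_finite)
    show "continuous_on {min 0 (2*pi)..max 0 (2*pi)} (\<lambda>t. g t * h' t + g' t * h t)"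
      using cont assms(2,4) by (auto intro!: continuous_intros intro: continuous_on_subset)
    show "((\<lambda>t. g t * h t) has_vector_derivative g t * h' t + g' t * h t) (at t within {min 0 (2*pi)..max 0 (2*pi)})" for t
      using has_vector_derivative_mult[OF assms(1,3)] by (rule has_vector_derivative_at_within)
  qed
  then have "set_lebesgue_integral lborel circ_par (\<lambda>t. g t * h' t + g' t * h t) = 0"
    by (simp add: set_integral_circ_par assms(5) zero_ereal_def)
  moreover have "set_lebesgue_integral lborel circ_par (\<lambda>t. g t * h' t + g' t * h t) =
      set_lebesgue_integral lborel circ_par (\<lambda>t. g t * h' t) + set_lebesgue_integral lborel circ_par (\<lambda>t. g' t * h t)"
    using cont assms(2,4) by (intro set_integral_circ_par_add continuous_intros)
  ultimately show ?thesis
    by (simp add: eq_neg_iff_add_eq_0)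
qed

lemma test_circ_has_derivative:
  "test_circ \<psi> \<Longrightarrow> (\<psi> has_vector_derivative vd \<psi> t) (at t)"
  using vector_derivative_works funpow_0 unfolding test_circ_def vd_def by metis

lemma test_circ_continuous_vd:
  assumes "test_circ \<psi>"
  shows "continuous_on UNIV (vd \<psi>)"
proof -
  have "vd \<psi> differentiable at t" for t
    using assms unfolding test_circ_def by (metis funpow_0 funpow_Suc_right o_apply)
  then show ?thesis
    by (auto intro!: continuous_at_imp_continuous_on differentiable_imp_continuous_within)
qed

lemma test_circ_vd:
  assumes "test_circ \<psi>"
  shows "test_circ (vd \<psi>)"
  unfolding test_circ_def
proof (intro conjI allI)
  fix t
  have "((\<lambda>s. s + 2*pi) has_real_derivative 1) (at t)"
    by (auto intro!: derivative_eq_intros)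
  then have "((\<lambda>s. \<psi> (s + 2*pi)) has_vector_derivative vd \<psi> (t + 2*pi)) (at t)"
    using vector_diff_chain_at[OF _ test_circ_has_derivative[OF assms], of "\<lambda>s. s + 2*pi" 1 t]
    by (simp add: o_def has_real_derivative_iff_has_vector_derivative)
  moreover have "(\<lambda>s. \<psi> (s + 2*pi)) = \<psi>"
    using assms by (simp add: test_circ_def)
  ultimately show "vd \<psi> (t + 2*pi) = vd \<psi> t"
    by (simp add: vd_def vector_derivative_at)
  show "((vd ^^ k) (vd \<psi>)) differentiable at t" for k
    using assms unfolding test_circ_def by (metis funpow_Suc_right o_apply)
qed

lemma weak_d_circ_fourier_mode:
  "weak_d_circ k (\<lambda>t. \<beta> * fourier_mode n t) (\<lambda>t. (\<i> * of_nat n) ^ k * \<beta> * fourier_mode n t)"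
proof (induction k)
  case 0
  then show ?case
    by (simp add: weak_d_circ_def)
next
  case (Suc k)
  show ?case
    unfolding weak_d_circ_def
  proof (intro allI impI)
    fix \<psi> assume \<psi>: "test_circ \<psi>"
    have "set_lebesgue_integral lborel circ_par (\<lambda>t. \<beta> * fourier_mode n t * (vd ^^ Suc k) \<psi> t) =
        (-1) ^ k * set_lebesgue_integral lborel circ_par (\<lambda>t. (\<i> * of_nat n) ^ k * \<beta> * fourier_mode n t * vd \<psi> t)"
      using Suc test_circ_vd[OF \<psi>] unfolding weak_d_circ_def funpow_Suc_right o_apply by blast
    also have "set_lebesgue_integral lborel circ_par (\<lambda>t. (\<i> * of_nat n) ^ k * \<beta> * fourier_mode n t * vd \<psi> t) =
        - set_lebesgue_integral lborel circ_par (\<lambda>t. (\<i> * of_nat n) ^ Suc k * \<beta> * fourier_mode n t * \<psi> t)"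
    proof -
      define \<gamma> where "\<gamma> = (\<i> * of_nat n) ^ k * \<beta>"
      have "\<gamma> * fourier_mode n (2*pi) * \<psi> (2*pi) = \<gamma> * fourier_mode n 0 * \<psi> 0"
        using \<psi> fourier_mode_periodic[of n 0] unfolding test_circ_def by (metis add_0)
      from integral_circ_par_by_parts[OF has_vector_derivative_fourier_mode continuous_on_fourier_mode
          test_circ_has_derivative[OF \<psi>] test_circ_continuous_vd[OF \<psi>] this]
      show ?thesis
        by (simp add: \<gamma>_def mult.assoc)
    qed
    finally show "set_lebesgue_integral lborel circ_par (\<lambda>t. \<beta> * fourier_mode n t * (vd ^^ Suc k) \<psi> t) =
        (-1) ^ Suc k * set_lebesgue_integral lborel circ_par (\<lambda>t. (\<i> * of_nat n) ^ Suc k * \<beta> * fourier_mode n t * \<psi> t)"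
      by simp
  qed
qed

lemma H2_circ_fourier_mode: "H2_circ (\<lambda>t. \<beta> * fourier_mode n t)"
  unfolding H2_circ_def
proof (intro conjI allI impI exI)
  have L2: "L2_on circ_par (\<lambda>t. \<gamma> * fourier_mode n t)" for \<gamma>
    by (rule L2_on_continuous[OF continuous_on_fourier_mode]) (auto simp: circ_par_def)
  then show "L2_on circ_par (\<lambda>t. \<beta> * fourier_mode n t)" .
  show "\<beta> * fourier_mode n (t + 2*pi) = \<beta> * fourier_mode n t" for t
    by (simp add: fourier_mode_periodic)
  show "L2_on circ_par (\<lambda>t. (\<i> * of_nat n) ^ k * \<beta> * fourier_mode n t)" for k
    using L2[of "(\<i> * of_nat n) ^ k * \<beta>"] by simp
  show "weak_d_circ k (\<lambda>t. \<beta> * fourier_mode n t) (\<lambda>t. (\<i> * of_nat n) ^ k * \<beta> * fourier_mode n t)" for k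
    by (rule weak_d_circ_fourier_mode)
qed

section \<open>Bessel functions\<close>

definition bessel_coeff :: "nat \<Rightarrow> nat \<Rightarrow> complex" where
  "bessel_coeff n m = (-1) ^ m / (fact m * fact (m + n))"

definition bessel_entire :: "nat \<Rightarrow> complex \<Rightarrow> complex" where
  "bessel_entire n x = (\<Sum>m. bessel_coeff n m * x ^ m)"

lemma summable_bessel_coeff: "summable (\<lambda>m. bessel_coeff n m * x ^ m)"
proof (rule summable_comparison_test')
  show "summable (\<lambda>m. inverse (fact m) * norm x ^ m)"
    by (rule summable_exp)
  show "norm (bessel_coeff n m * x ^ m) \<le> inverse (fact m) * norm x ^ m" for m
  proof -
    have "norm (bessel_coeff n m * x ^ m) = norm x ^ m / (fact m * fact (m + n))"
      by (simp add: bessel_coeff_def norm_mult norm_divide norm_power)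
    also have "\<dots> \<le> norm x ^ m / fact m"
      by (rule divide_left_mono) (auto simp: fact_ge_1)
    finally show ?thesis
      by (simp add: field_simps)
  qed
qed

lemma diffs_bessel_coeff: "diffs (bessel_coeff n) = (\<lambda>m. - bessel_coeff (Suc n) m)"
proof
  fix m
  have "diffs (bessel_coeff n) m = of_nat (Suc m) * ((-1) ^ Suc m / (fact (Suc m) * fact (Suc m + n)))"
    by (simp add: diffs_def bessel_coeff_def)
  also have "\<dots> = - ((-1) ^ m / (fact m * fact (m + Suc n)))"
    by (simp add: fact_Suc field_simps del: of_nat_Suc)
  finally show "diffs (bessel_coeff n) m = - bessel_coeff (Suc n) m"
    by (simp add: bessel_coeff_def)
qed

lemma has_field_derivative_bessel_entire:
  "(bessel_entire n has_field_derivative - bessel_entire (Suc n) x) (at x)"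
proof -
  have "((\<lambda>x. \<Sum>m. bessel_coeff n m * x ^ m) has_field_derivative (\<Sum>m. diffs (bessel_coeff n) m * x ^ m)) (at x)"
    by (rule termdiffs_strong_converges_everywhere) (rule summable_bessel_coeff)
  moreover have "(\<Sum>m. diffs (bessel_coeff n) m * x ^ m) = - bessel_entire (Suc n) x"
    unfolding diffs_bessel_coeff bessel_entire_def
    using suminf_minus[OF summable_bessel_coeff[of "Suc n" x]] by simp
  ultimately show ?thesis
    unfolding bessel_entire_def[abs_def] by simp
qed

lemma continuous_on_bessel_entire [continuous_intros]:
  "continuous_on S f \<Longrightarrow> continuous_on S (\<lambda>x. bessel_entire n (f x))"
  by (rule continuous_on_compose2[of UNIV "bessel_entire n"])
     (auto intro: continuous_at_imp_continuous_on DERIV_isCont has_field_derivative_bessel_entire)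

lemma has_field_derivative_bessel_entire_chain [derivative_intros]:
  "(f has_field_derivative f') (at x within S) \<Longrightarrow>
    ((\<lambda>x. bessel_entire n (f x)) has_field_derivative - bessel_entire (Suc n) (f x) * f') (at x within S)"
  using DERIV_chain2[OF has_field_derivative_bessel_entire] by blast

lemma bessel_entire_0: "bessel_entire n 0 = 1 / fact n"
  using powser_zero[of "bessel_coeff n"] by (simp add: bessel_entire_def bessel_coeff_def)

lemma bessel_entire_recurrence:
  "bessel_entire n x = of_nat (n + 1) * bessel_entire (n + 1) x - x * bessel_entire (n + 2) x"
proof -
  define shifted where "shifted m = (if m = 0 then 0 else bessel_coeff (n + 2) (m - 1) * x ^ m)" for m
  have "(\<lambda>m. x * (bessel_coeff (n + 2) m * x ^ m)) sums (x * bessel_entire (n + 2) x)"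
    unfolding bessel_entire_def by (intro sums_mult summable_sums summable_bessel_coeff)
  then have "(\<lambda>m. shifted (Suc m)) sums (x * bessel_entire (n + 2) x)"
    by (simp add: shifted_def algebra_simps)
  then have shifted: "shifted sums (x * bessel_entire (n + 2) x)"
    by (subst (asm) sums_Suc_iff) (simp add: shifted_def)
  have "(\<lambda>m. of_nat (n + 1) * (bessel_coeff (n + 1) m * x ^ m)) sums (of_nat (n + 1) * bessel_entire (n + 1) x)"
    unfolding bessel_entire_def by (intro sums_mult summable_sums summable_bessel_coeff)
  from sums_diff[OF this shifted]
  have "(\<lambda>m. bessel_coeff n m * x ^ m) sums (of_nat (n + 1) * bessel_entire (n + 1) x - x * bessel_entire (n + 2) x)"
  proof (rule back_subst[of "\<lambda>f. f sums _"], intro ext)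
    fix m
    show "of_nat (n + 1) * (bessel_coeff (n + 1) m * x ^ m) - shifted m = bessel_coeff n m * x ^ m"
    proof (cases m)
      case 0
      then show ?thesis
        by (simp add: shifted_def bessel_coeff_def fact_Suc field_simps del: of_nat_Suc)
    next
      case (Suc k)
      have "of_nat (n + 1) * bessel_coeff (n + 1) (Suc k) - bessel_coeff (n + 2) k = bessel_coeff n (Suc k)"
        by (simp add: bessel_coeff_def fact_Suc field_simps del: of_nat_Suc) (simp add: algebra_simps)
      then show ?thesis
        using Suc by (simp add: shifted_def algebra_simps)
    qed
  qed
  then show ?thesis
    unfolding bessel_entire_def by (simp add: sums_iff)
qed

lemma bessel_J_eq: "bessel_J n = (\<lambda>z. (z / 2) ^ n * bessel_entire n (z\<^sup>2 / 4))"
proof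
  fix z :: complex
  have sq: "(z / 2)\<^sup>2 = z\<^sup>2 / 4"
    by (simp add: power_divide)
  have "(z / 2) ^ (2 * m + n) = (z / 2) ^ n * (z\<^sup>2 / 4) ^ m" for m
    unfolding power_add power_mult sq by (rule mult.commute)
  then have "(-1) ^ m / (fact m * fact (m + n)) * (z / 2) ^ (2 * m + n) = (z / 2) ^ n * (bessel_coeff n m * (z\<^sup>2 / 4) ^ m)" for m
    by (simp add: bessel_coeff_def)
  then have "bessel_J n z = (\<Sum>m. (z / 2) ^ n * (bessel_coeff n m * (z\<^sup>2 / 4) ^ m))"
    unfolding bessel_J_def by simp
  also have "\<dots> = (z / 2) ^ n * bessel_entire n (z\<^sup>2 / 4)"
    unfolding bessel_entire_def by (rule suminf_mult[OF summable_bessel_coeff])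
  finally show "bessel_J n z = (z / 2) ^ n * bessel_entire n (z\<^sup>2 / 4)" .
qed

lemma bessel_J_deriv:
  "z * deriv (bessel_J n) z =
    (z / 2) ^ n * (of_nat n * bessel_entire n (z\<^sup>2 / 4) - z\<^sup>2 / 2 * bessel_entire (Suc n) (z\<^sup>2 / 4))"
proof -
  have "((\<lambda>z. (z / 2) ^ n * bessel_entire n (z\<^sup>2 / 4)) has_field_derivative
      of_nat n * (z / 2) ^ (n - 1) / 2 * bessel_entire n (z\<^sup>2 / 4) -
      (z / 2) ^ n * bessel_entire (Suc n) (z\<^sup>2 / 4) * (z / 2)) (at z)"
    by (auto intro!: derivative_eq_intros)
  then have deriv: "deriv (bessel_J n) z = of_nat n * (z / 2) ^ (n - 1) / 2 * bessel_entire n (z\<^sup>2 / 4) -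
      (z / 2) ^ n * bessel_entire (Suc n) (z\<^sup>2 / 4) * (z / 2)"
    unfolding bessel_J_eq by (rule DERIV_imp_deriv)
  have lower_power: "z * (of_nat n * (z / 2) ^ (n - 1) / 2) = of_nat n * (z / 2) ^ n"
    by (cases n) (simp_all add: field_simps)
  have "z * deriv (bessel_J n) z = z * (of_nat n * (z / 2) ^ (n - 1) / 2) * bessel_entire n (z\<^sup>2 / 4) -
      (z / 2) ^ n * bessel_entire (Suc n) (z\<^sup>2 / 4) * (z * (z / 2))"
    unfolding deriv by (simp add: algebra_simps)
  also have "\<dots> = (z / 2) ^ n * (of_nat n * bessel_entire n (z\<^sup>2 / 4) - z\<^sup>2 / 2 * bessel_entire (Suc n) (z\<^sup>2 / 4))"
    unfolding lower_power by (simp add: algebra_simps power2_eq_square)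
  finally show ?thesis .
qed

section \<open>The Bessel mode in Cartesian coordinates\<close>

(* Treating the mode as a function of two complex variables lets the field-derivative rules compute
   its partial derivatives; the mode itself is the restriction to real arguments. *)
definition real_restrict :: "(complex \<Rightarrow> complex \<Rightarrow> complex) \<Rightarrow> pt \<Rightarrow> complex" where
  "real_restrict G p = G (of_real (fst p)) (of_real (snd p))"

lemma pd_real_restrict_x:
  assumes "\<And>a b. ((\<lambda>a. G a b) has_field_derivative Gx a b) (at a)"
  shows "pd 0 (real_restrict G) = real_restrict Gx"
proof
  fix p :: pt
  obtain x y where p: "p = (x, y)" by fastforce
  show "pd 0 (real_restrict G) p = real_restrict Gx p"
    unfolding p real_restrict_def using has_vector_derivative_real_field[OF assms]
    by (intro pd_eqI_x) simp
qed

lemma pd_real_restrict_y: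
  assumes "\<And>a b. ((\<lambda>b. G a b) has_field_derivative Gy a b) (at b)" and "i \<noteq> 0"
  shows "pd i (real_restrict G) = real_restrict Gy"
proof
  fix p :: pt
  obtain x y where p: "p = (x, y)" by fastforce
  show "pd i (real_restrict G) p = real_restrict Gy p"
    unfolding p real_restrict_def using has_vector_derivative_real_field[OF assms(1)] assms(2)
    by (intro pd_eqI_y) simp_all
qed

lemma C1_partials_real_restrict:
  assumes dx: "\<And>a b. ((\<lambda>a. G a b) has_field_derivative Gx a b) (at a)"
    and dy: "\<And>a b. ((\<lambda>b. G a b) has_field_derivative Gy a b) (at b)"
    and "continuous_on UNIV (real_restrict G)" "continuous_on UNIV (real_restrict Gx)"
      "continuous_on UNIV (real_restrict Gy)"
  shows "C1_partials (real_restrict G)"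
  unfolding C1_partials_def
proof (intro conjI allI)
  show "continuous_on UNIV (pd i (real_restrict G))" for i
    using assms(4,5) pd_real_restrict_x[OF dx] pd_real_restrict_y[OF dy] by (cases "i = 0") simp_all
  show "(\<lambda>t. real_restrict G (t, y)) differentiable at x" "(\<lambda>t. real_restrict G (x, t)) differentiable at y" for x y
    unfolding real_restrict_def fst_conv snd_conv
    by (rule differentiableI_vector, rule has_vector_derivative_real_field, rule dx dy)+
qed (rule assms(3))

definition mode_cart :: "nat \<Rightarrow> complex \<Rightarrow> complex \<Rightarrow> complex \<Rightarrow> complex \<Rightarrow> complex" where
  "mode_cart n c \<mu> a b = c * (a + \<i> * b) ^ n * bessel_entire n (\<mu> * (a\<^sup>2 + b\<^sup>2))"

definition mode_cart_dx :: "nat \<Rightarrow> complex \<Rightarrow> complex \<Rightarrow> complex \<Rightarrow> complex \<Rightarrow> complex" where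
  "mode_cart_dx n c \<mu> a b = c * (of_nat n * (a + \<i> * b) ^ (n - 1) * bessel_entire n (\<mu> * (a\<^sup>2 + b\<^sup>2))
      - 2 * \<mu> * a * (a + \<i> * b) ^ n * bessel_entire (Suc n) (\<mu> * (a\<^sup>2 + b\<^sup>2)))"

definition mode_cart_dy :: "nat \<Rightarrow> complex \<Rightarrow> complex \<Rightarrow> complex \<Rightarrow> complex \<Rightarrow> complex" where
  "mode_cart_dy n c \<mu> a b = c * (\<i> * of_nat n * (a + \<i> * b) ^ (n - 1) * bessel_entire n (\<mu> * (a\<^sup>2 + b\<^sup>2))
      - 2 * \<mu> * b * (a + \<i> * b) ^ n * bessel_entire (Suc n) (\<mu> * (a\<^sup>2 + b\<^sup>2)))"

definition mode_cart_dxx :: "nat \<Rightarrow> complex \<Rightarrow> complex \<Rightarrow> complex \<Rightarrow> complex \<Rightarrow> complex" where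
  "mode_cart_dxx n c \<mu> a b = c * (of_nat n * of_nat (n - 1) * (a + \<i> * b) ^ (n - 1 - 1) * bessel_entire n (\<mu> * (a\<^sup>2 + b\<^sup>2))
     - 4 * \<mu> * a * of_nat n * (a + \<i> * b) ^ (n - 1) * bessel_entire (Suc n) (\<mu> * (a\<^sup>2 + b\<^sup>2))
     - 2 * \<mu> * (a + \<i> * b) ^ n * bessel_entire (Suc n) (\<mu> * (a\<^sup>2 + b\<^sup>2))
     + 4 * \<mu>\<^sup>2 * a\<^sup>2 * (a + \<i> * b) ^ n * bessel_entire (Suc (Suc n)) (\<mu> * (a\<^sup>2 + b\<^sup>2)))"

definition mode_cart_dxy :: "nat \<Rightarrow> complex \<Rightarrow> complex \<Rightarrow> complex \<Rightarrow> complex \<Rightarrow> complex" where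
  "mode_cart_dxy n c \<mu> a b = c * (\<i> * of_nat n * of_nat (n - 1) * (a + \<i> * b) ^ (n - 1 - 1) * bessel_entire n (\<mu> * (a\<^sup>2 + b\<^sup>2))
     - 2 * \<mu> * b * of_nat n * (a + \<i> * b) ^ (n - 1) * bessel_entire (Suc n) (\<mu> * (a\<^sup>2 + b\<^sup>2))
     - 2 * \<i> * \<mu> * a * of_nat n * (a + \<i> * b) ^ (n - 1) * bessel_entire (Suc n) (\<mu> * (a\<^sup>2 + b\<^sup>2))
     + 4 * \<mu>\<^sup>2 * a * b * (a + \<i> * b) ^ n * bessel_entire (Suc (Suc n)) (\<mu> * (a\<^sup>2 + b\<^sup>2)))"

definition mode_cart_dyy :: "nat \<Rightarrow> complex \<Rightarrow> complex \<Rightarrow> complex \<Rightarrow> complex \<Rightarrow> complex" where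
  "mode_cart_dyy n c \<mu> a b = c * (- of_nat n * of_nat (n - 1) * (a + \<i> * b) ^ (n - 1 - 1) * bessel_entire n (\<mu> * (a\<^sup>2 + b\<^sup>2))
     - 4 * \<i> * \<mu> * b * of_nat n * (a + \<i> * b) ^ (n - 1) * bessel_entire (Suc n) (\<mu> * (a\<^sup>2 + b\<^sup>2))
     - 2 * \<mu> * (a + \<i> * b) ^ n * bessel_entire (Suc n) (\<mu> * (a\<^sup>2 + b\<^sup>2))
     + 4 * \<mu>\<^sup>2 * b\<^sup>2 * (a + \<i> * b) ^ n * bessel_entire (Suc (Suc n)) (\<mu> * (a\<^sup>2 + b\<^sup>2)))"

lemma mode_cart_has_derivative:
  "((\<lambda>a. mode_cart n c \<mu> a b) has_field_derivative mode_cart_dx n c \<mu> a b) (at a)"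
  "((\<lambda>b. mode_cart n c \<mu> a b) has_field_derivative mode_cart_dy n c \<mu> a b) (at b)"
  "((\<lambda>a. mode_cart_dx n c \<mu> a b) has_field_derivative mode_cart_dxx n c \<mu> a b) (at a)"
  "((\<lambda>b. mode_cart_dx n c \<mu> a b) has_field_derivative mode_cart_dxy n c \<mu> a b) (at b)"
  "((\<lambda>a. mode_cart_dy n c \<mu> a b) has_field_derivative mode_cart_dxy n c \<mu> a b) (at a)"
  "((\<lambda>b. mode_cart_dy n c \<mu> a b) has_field_derivative mode_cart_dyy n c \<mu> a b) (at b)"
  unfolding mode_cart_def mode_cart_dx_def mode_cart_dy_def mode_cart_dxx_def mode_cart_dxy_def mode_cart_dyy_def
  by (auto intro!: derivative_eq_intros simp: algebra_simps power2_eq_square)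

lemma continuous_on_mode_cart:
  "continuous_on UNIV (real_restrict (mode_cart n c \<mu>))" "continuous_on UNIV (real_restrict (mode_cart_dx n c \<mu>))"
  "continuous_on UNIV (real_restrict (mode_cart_dy n c \<mu>))" "continuous_on UNIV (real_restrict (mode_cart_dxx n c \<mu>))"
  "continuous_on UNIV (real_restrict (mode_cart_dxy n c \<mu>))" "continuous_on UNIV (real_restrict (mode_cart_dyy n c \<mu>))"
  unfolding real_restrict_def mode_cart_def mode_cart_dx_def mode_cart_dy_def mode_cart_dxx_def mode_cart_dxy_def mode_cart_dyy_def
  by (intro continuous_intros)+

lemma pd_mode_cart:
  "pd 0 (real_restrict (mode_cart n c \<mu>)) = real_restrict (mode_cart_dx n c \<mu>)"
  "pd 1 (real_restrict (mode_cart n c \<mu>)) = real_restrict (mode_cart_dy n c \<mu>)"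
  "pd 0 (real_restrict (mode_cart_dx n c \<mu>)) = real_restrict (mode_cart_dxx n c \<mu>)"
  "pd 1 (real_restrict (mode_cart_dy n c \<mu>)) = real_restrict (mode_cart_dyy n c \<mu>)"
  by (rule pd_real_restrict_x pd_real_restrict_y, rule mode_cart_has_derivative, simp?)+

lemma C2_partials_mode_cart: "C2_partials (real_restrict (mode_cart n c \<mu>))"
proof -
  note d = mode_cart_has_derivative and cont = continuous_on_mode_cart
  have "C1_partials (real_restrict (mode_cart n c \<mu>))"
    by (rule C1_partials_real_restrict[OF d(1,2) cont(1,2,3)])
  moreover have "C1_partials (real_restrict (mode_cart_dx n c \<mu>))"
    by (rule C1_partials_real_restrict[OF d(3,4) cont(2,4,5)])
  moreover have "C1_partials (real_restrict (mode_cart_dy n c \<mu>))"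
    by (rule C1_partials_real_restrict[OF d(5,6) cont(3,5,6)])
  moreover have "pd i (real_restrict (mode_cart n c \<mu>)) =
      (if i = 0 then real_restrict (mode_cart_dx n c \<mu>) else real_restrict (mode_cart_dy n c \<mu>))" for i
    using pd_real_restrict_x[OF d(1)] pd_real_restrict_y[OF d(2)] by simp
  ultimately show ?thesis
    unfolding C2_partials_def by simp
qed

lemma laplacian_mode_cart:
  "laplacian (real_restrict (mode_cart n c \<mu>)) p = - 4 * \<mu> * real_restrict (mode_cart n c \<mu>) p"
proof -
  define a b where "a = complex_of_real (fst p)" and "b = complex_of_real (snd p)"
  define w x where "w = a + \<i> * b" and "x = \<mu> * (a\<^sup>2 + b\<^sup>2)"
  have lower_power: "of_nat n * w ^ (n - 1) * w = of_nat n * w ^ n"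
    by (cases n) auto
  have "mode_cart_dxx n c \<mu> a b + mode_cart_dyy n c \<mu> a b =
      c * (- 4 * \<mu> * (of_nat n * w ^ (n - 1) * w) * bessel_entire (Suc n) x
        - 4 * \<mu> * w ^ n * bessel_entire (Suc n) x + 4 * \<mu> * x * w ^ n * bessel_entire (Suc (Suc n)) x)"
    unfolding mode_cart_dxx_def mode_cart_dyy_def w_def x_def by (simp add: algebra_simps power2_eq_square)
  also have "\<dots> = c * (- 4 * \<mu>) * w ^ n * (of_nat (n + 1) * bessel_entire (n + 1) x - x * bessel_entire (n + 2) x)"
    unfolding lower_power by (simp add: algebra_simps)
  also have "\<dots> = - 4 * \<mu> * mode_cart n c \<mu> a b"
    unfolding bessel_entire_recurrence[symmetric] mode_cart_def w_def x_def by (simp add: algebra_simps)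
  finally show ?thesis
    unfolding laplacian_def pd_mode_cart by (simp add: real_restrict_def a_def b_def)
qed

lemma cos_sin_complex_sum_squares: "(complex_of_real (cos t))\<^sup>2 + (complex_of_real (sin t))\<^sup>2 = 1"
  by (simp flip: of_real_power of_real_add)

lemma cos_sin_complex_power: "(complex_of_real (cos t) + \<i> * complex_of_real (sin t)) ^ n = fourier_mode n t"
proof -
  have "complex_of_real (cos t) + \<i> * complex_of_real (sin t) = exp (\<i> * of_real t)"
    by (simp add: cis_conv_exp[symmetric] complex_eq_iff)
  then show ?thesis
    by (simp add: fourier_mode_def exp_of_nat_mult[symmetric] algebra_simps)
qed

lemma bd_mode_cart: "bd (real_restrict (mode_cart n c \<mu>)) = (\<lambda>t. (c * bessel_entire n \<mu>) * fourier_mode n t)"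
  by (simp add: fun_eq_iff bd_def real_restrict_def mode_cart_def cos_sin_complex_power cos_sin_complex_sum_squares)

lemma radial_deriv_mode_cart:
  "radial_deriv (real_restrict (mode_cart n c \<mu>)) =
    (\<lambda>t. (c * (of_nat n * bessel_entire n \<mu> - 2 * \<mu> * bessel_entire (Suc n) \<mu>)) * fourier_mode n t)"
proof
  fix t
  define a b where "a = complex_of_real (cos t)" and "b = complex_of_real (sin t)"
  have lower_power: "of_nat n * (a + \<i> * b) ^ (n - 1) * (a + \<i> * b) = of_nat n * (a + \<i> * b) ^ n"
    by (cases n) auto
  have "radial_deriv (real_restrict (mode_cart n c \<mu>)) t = a * mode_cart_dx n c \<mu> a b + b * mode_cart_dy n c \<mu> a b"
    unfolding radial_deriv_def pd_mode_cart by (simp add: real_restrict_def a_def b_def)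
  also have "\<dots> = c * (of_nat n * (a + \<i> * b) ^ (n - 1) * (a + \<i> * b) * bessel_entire n (\<mu> * (a\<^sup>2 + b\<^sup>2))
      - 2 * \<mu> * (a\<^sup>2 + b\<^sup>2) * (a + \<i> * b) ^ n * bessel_entire (Suc n) (\<mu> * (a\<^sup>2 + b\<^sup>2)))"
    by (simp add: mode_cart_dx_def mode_cart_dy_def algebra_simps power2_eq_square)
  also have "\<dots> = (c * (of_nat n * bessel_entire n \<mu> - 2 * \<mu> * bessel_entire (Suc n) \<mu>)) * fourier_mode n t"
    unfolding lower_power unfolding a_def b_def cos_sin_complex_sum_squares cos_sin_complex_power
    by (simp add: algebra_simps)
  finally show "radial_deriv (real_restrict (mode_cart n c \<mu>)) t =
      (c * (of_nat n * bessel_entire n \<mu> - 2 * \<mu> * bessel_entire (Suc n) \<mu>)) * fourier_mode n t" .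
qed

lemma dom_A_mode_cart: "dom_A (real_restrict (mode_cart n c \<mu>))"
  unfolding dom_A_def bd_mode_cart
  using H2_disk_C2_partials[OF C2_partials_mode_cart] H2_circ_fourier_mode
  by (auto intro: continuous_on_subset[OF continuous_on_mode_cart(1)])

lemma P_eq_mode_cart:
  assumes "4 * \<mu> + z\<^sup>2 = 0"
    and "c * ((of_nat n ^ 2 + z + z\<^sup>2) * bessel_entire n \<mu> +
      (of_nat n * bessel_entire n \<mu> - 2 * \<mu> * bessel_entire (Suc n) \<mu>)) = 0"
  shows "P_eq z (real_restrict (mode_cart n c \<mu>)) (\<lambda>_. 0) (\<lambda>_. 0)"
  unfolding P_eq_def
proof (intro conjI exI)
  let ?U = "real_restrict (mode_cart n c \<mu>)"
  show "dom_A ?U"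
    by (rule dom_A_mode_cart)
  show "weak_lap ?U (laplacian ?U)"
    by (rule weak_lap_C2_partials[OF C2_partials_mode_cart])
  have "- laplacian ?U p + z\<^sup>2 * ?U p = (4 * \<mu> + z\<^sup>2) * ?U p" for p
    by (simp add: laplacian_mode_cart algebra_simps)
  then show "AE p in lborel. p \<in> Disk \<longrightarrow> - laplacian ?U p + z\<^sup>2 * ?U p = 0"
    using assms(1) by simp
  show "normal_deriv ?U (radial_deriv ?U)"
    by (rule normal_deriv_C2_partials[OF C2_partials_mode_cart])
  show "weak_d_circ 2 (bd ?U) (\<lambda>t. (\<i> * of_nat n) ^ 2 * (c * bessel_entire n \<mu>) * fourier_mode n t)"
    unfolding bd_mode_cart by (rule weak_d_circ_fourier_mode)
  have "- ((\<i> * of_nat n) ^ 2 * (c * bessel_entire n \<mu>) * fourier_mode n t) + radial_deriv ?U t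
        + z * bd ?U t + z\<^sup>2 * bd ?U t =
      fourier_mode n t * (c * ((of_nat n ^ 2 + z + z\<^sup>2) * bessel_entire n \<mu> +
        (of_nat n * bessel_entire n \<mu> - 2 * \<mu> * bessel_entire (Suc n) \<mu>)))" for t
    unfolding radial_deriv_mode_cart bd_mode_cart by (simp add: power_mult_distrib algebra_simps)
  then show "AE t in lborel. t \<in> circ_par \<longrightarrow>
      - ((\<i> * of_nat n) ^ 2 * (c * bessel_entire n \<mu>) * fourier_mode n t) + radial_deriv ?U t
        + z * bd ?U t + z\<^sup>2 * bd ?U t = 0"
    using assms(2) by simp
qed

lemma mode_eq_mode_cart: "mode n lam = real_restrict (mode_cart n ((lam / 2) ^ n) (lam\<^sup>2 / 4))"
proof
  fix p :: pt
  obtain x y where p: "p = (x, y)" by fastforce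
  define w where "w = Complex x y"
  define r where "r = cmod w"
  define E where "E = exp (\<i> * of_real (Arg w))"
  have polar: "complex_of_real r * E = of_real x + \<i> * of_real y"
    using rcis_cmod_Arg[of w] unfolding rcis_def cis_conv_exp E_def r_def w_def Complex_eq .
  have r2: "(complex_of_real r)\<^sup>2 = (of_real x)\<^sup>2 + (of_real y)\<^sup>2"
    unfolding r_def w_def complex_norm by (simp flip: of_real_power)
  have "mode n lam p = bessel_J n (lam * of_real r) * exp (\<i> * of_nat n * of_real (Arg w))"
    by (simp add: mode_def mode_polar_def p r_def w_def norm_Pair complex_norm)
  also have "\<dots> = (lam * of_real r / 2) ^ n * bessel_entire n ((lam * of_real r)\<^sup>2 / 4) * E ^ n"
    unfolding bessel_J_eq E_def by (simp flip: exp_of_nat_mult add: algebra_simps)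
  also have "\<dots> = (lam / 2) ^ n * (of_real r * E) ^ n * bessel_entire n (lam\<^sup>2 / 4 * (of_real r)\<^sup>2)"
    by (simp add: power_mult_distrib field_simps)
  also have "\<dots> = real_restrict (mode_cart n ((lam / 2) ^ n) (lam\<^sup>2 / 4)) p"
    unfolding polar r2 by (simp add: real_restrict_def mode_cart_def p)
  finally show "mode n lam p = real_restrict (mode_cart n ((lam / 2) ^ n) (lam\<^sup>2 / 4)) p" .
qed

lemma mode_cart_not_AE_zero:
  assumes "c \<noteq> 0"
  shows "\<not> (AE p in lborel. p \<in> Disk \<longrightarrow> real_restrict (mode_cart n c \<mu>) p = 0)"
proof
  let ?U = "real_restrict (mode_cart n c \<mu>)"
  assume AE_zero: "AE p in lborel. p \<in> Disk \<longrightarrow> ?U p = 0"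
  have "closed (?U -` {0})"
    by (rule closed_vimage[OF closed_singleton continuous_on_mode_cart(1)])
  then have zero: "?U p = 0" if "p \<in> Disk" for p
    using mem_closed_if_AE_lebesgue_open[of Disk "?U -` {0}" p] AE_completion[OF AE_zero] that
    by (simp add: Disk_def)
  define f where "f t = bessel_entire n (\<mu> * (complex_of_real t)\<^sup>2)" for t
  have "continuous_on UNIV f"
    unfolding f_def by (intro continuous_intros)
  moreover have "f 0 \<noteq> 0"
    by (simp add: f_def bessel_entire_0)
  ultimately obtain e where "e > 0" and e: "\<And>t. dist 0 t < e \<Longrightarrow> f t \<noteq> 0"
    using continuous_at_avoid[of 0 f 0] by (metis continuous_on_eq_continuous_at open_UNIV UNIV_I)
  define t where "t = min (e / 2) (1 / 2)"
  have "0 < t" "t < e" "t < 1"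
    using \<open>e > 0\<close> by (auto simp: t_def)
  then have "(t, 0) \<in> Disk"
    by (simp add: Disk_iff abs_square_less_1)
  moreover have "?U (t, 0) = c * of_real t ^ n * f t"
    by (simp add: real_restrict_def mode_cart_def f_def)
  moreover have "f t \<noteq> 0"
    using e \<open>0 < t\<close> \<open>t < e\<close> by (simp add: dist_real_def)
  ultimately show False
    using zero assms \<open>0 < t\<close> by simp
qed

section \<open>The spectrum\<close>

lemma P_eq_zero: "P_eq z (\<lambda>_. 0) (\<lambda>_. 0) (\<lambda>_. 0)"
proof -
  have "P_eq z (real_restrict (mode_cart 0 0 (- z\<^sup>2 / 4))) (\<lambda>_. 0) (\<lambda>_. 0)"
    by (rule P_eq_mode_cart) simp_all
  moreover have "real_restrict (mode_cart 0 0 (- z\<^sup>2 / 4)) = (\<lambda>_. 0)"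
    by (simp add: fun_eq_iff real_restrict_def mode_cart_def)
  ultimately show ?thesis
    by simp
qed

lemma in_spec_P_if_nontrivial_kernel:
  assumes "P_eq z U (\<lambda>_. 0) (\<lambda>_. 0)" and "\<not> (AE p in lborel. p \<in> Disk \<longrightarrow> U p = 0)"
  shows "z \<in> spec_P"
  unfolding spec_P_def P_invertible_def
proof clarify
  fix R :: "(pt \<Rightarrow> complex) \<Rightarrow> (real \<Rightarrow> complex) \<Rightarrow> pt \<Rightarrow> complex"
  assume "\<forall>u f g. inH f g \<longrightarrow> P_eq z u f g \<longrightarrow> eqH (R f g) (bd (R f g)) u (bd u)"
  moreover have "inH (\<lambda>_. 0) (\<lambda>_. 0)"
    unfolding inH_def by (intro conjI L2_on_continuous) (auto simp: Disk_def circ_par_def)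
  ultimately have "eqH (R (\<lambda>_. 0) (\<lambda>_. 0)) (bd (R (\<lambda>_. 0) (\<lambda>_. 0))) U (bd U)"
    and "eqH (R (\<lambda>_. 0) (\<lambda>_. 0)) (bd (R (\<lambda>_. 0) (\<lambda>_. 0))) (\<lambda>_. 0) (bd (\<lambda>_. 0))"
    using assms(1) P_eq_zero by blast+
  then have "AE p in lborel. p \<in> Disk \<longrightarrow> R (\<lambda>_. 0) (\<lambda>_. 0) p = U p"
    and "AE p in lborel. p \<in> Disk \<longrightarrow> R (\<lambda>_. 0) (\<lambda>_. 0) p = 0"
    unfolding eqH_def by blast+
  then have "AE p in lborel. p \<in> Disk \<longrightarrow> U p = 0"
    by eventually_elim auto
  with assms(2) show False
    by contradiction
qed

theorem lemma3p18:
  fixes n :: nat and lam :: complex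
  assumes "lam \<noteq> 0"
    and "(of_nat n ^ 2 + \<i> * lam - lam ^ 2) * bessel_J n lam + lam * deriv (bessel_J n) lam = 0"
  shows "\<i> * lam \<in> spec_P \<and> dom_A (mode n lam) \<and>
         \<not> eqH (mode n lam) (bd (mode n lam)) (\<lambda>_. 0) (\<lambda>_. 0) \<and>
         P_eq (\<i> * lam) (mode n lam) (\<lambda>_. 0) (\<lambda>_. 0)"
proof -
  define c \<mu> where "c = (lam / 2) ^ n" and "\<mu> = lam\<^sup>2 / 4"
  have mode: "mode n lam = real_restrict (mode_cart n c \<mu>)"
    unfolding c_def \<mu>_def by (rule mode_eq_mode_cart)
  have eigen: "4 * \<mu> + (\<i> * lam)\<^sup>2 = 0"
    by (simp add: \<mu>_def power_mult_distrib)
  have boundary: "c * ((of_nat n ^ 2 + \<i> * lam + (\<i> * lam)\<^sup>2) * bessel_entire n \<mu> +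
      (of_nat n * bessel_entire n \<mu> - 2 * \<mu> * bessel_entire (Suc n) \<mu>)) = 0"
    using assms(2) unfolding bessel_J_eq[of n] bessel_J_deriv[unfolded bessel_J_eq]
    by (simp add: c_def \<mu>_def power_mult_distrib algebra_simps)
  have kernel: "P_eq (\<i> * lam) (mode n lam) (\<lambda>_. 0) (\<lambda>_. 0)"
    unfolding mode by (rule P_eq_mode_cart[OF eigen boundary])
  have nonzero: "\<not> (AE p in lborel. p \<in> Disk \<longrightarrow> mode n lam p = 0)"
    unfolding mode using assms(1) by (intro mode_cart_not_AE_zero) (simp add: c_def)
  show ?thesis
    using in_spec_P_if_nontrivial_kernel[OF kernel nonzero] kernel nonzero
      dom_A_mode_cart[of n c \<mu>] mode
    by (auto simp: eqH_def)
qed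

end
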